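(* Let $N, K, k, M$ be positive integers, let $B$ and $\Theta$ be finite nonempty sets, and let $\mathbf f_1,\dots,\mathbf f_K \in \mathbb C^N$ be steering vectors (beams). Let $\{R(\cdot,\boldsymbol\theta,\boldsymbol\beta) : (\boldsymbol\theta,\boldsymbol\beta)\in B^k\times\Theta^k\}$ be a family of real-valued functions on $\mathbb C^N$, and fix a true parameter $(\boldsymbol\theta^*,\boldsymbol\beta^* )\in B^k\times\Theta^k$. Let $a_1,\dots,a_M\in\{1,\dots,K\}$ be actions, and suppose the observed rewards are $r_t = R(\mathbf f_{a_t},\boldsymbol\theta^*,\boldsymbol\beta^* )+\eta_t$ for $t=1,\dots,M$, where $\eta_1,\dots,\eta_M$ are independent $\mathcal N(0,\sigma^2)$ random variables, independent of the actions, with $\sigma>0$ a known constant. For $(\boldsymbol\theta,\boldsymbol\beta)\in B^k\times\Theta^k$ define $$\mathrm{SSE}_M(\boldsymbol\theta,\boldsymbol\beta)=\sum_{t=1}^M\big(R(\mathbf f_{a_t},\boldsymbol\theta,\boldsymbol\beta)-r_t\big)^2,$$ and for a function $g:\mathbb C^N\to\mathbb R$ define the data norm $\|g\|_{S_M}=\sqrt{\sum_{t=1}^M g(\mathbf f_{a_t})^2}$. Then for every $\delta\in(0,1)$ there exists an event $E$ with $\mathbb P(E)\ge 1-\delta$ on which, simultaneously for all $(\boldsymbol\theta,\boldsymbol\beta)\in B^k\times\Theta^k$, $$\mathrm{SSE}_M(\boldsymbol\theta,\boldsymbol\beta)-\mathrm{SSE}_M(\boldsymbol\theta^*,\boldsymbol\beta^*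 )\ \ge\ \tfrac12\big\|R(\cdot,\boldsymbol\theta,\boldsymbol\beta)-R(\cdot,\boldsymbol\theta^*,\boldsymbol\beta^* )\big\|_{S_M}^2-4k\sigma^2\log\Big(\frac{|B|\,|\Theta|}{\delta}\Big)$$ and $$\mathrm{SSE}_M(\boldsymbol\theta,\boldsymbol\beta)-\mathrm{SSE}_M(\boldsymbol\theta^*,\boldsymbol\beta^* )\ \le\ \tfrac32\big\|R(\cdot,\boldsymbol\theta,\boldsymbol\beta)-R(\cdot,\boldsymbol\theta^*,\boldsymbol\beta^* )\big\|_{S_M}^2+4k\sigma^2\log\Big(\frac{|B|\,|\Theta|}{\delta}\Big).$$
   Context: This is the setting of a bandit-style beam selection problem: at each time step $t$ a beam index $a_t\in\{1,\dots,K\}$ is played and a noisy reward $r_t$ is observed. The reward model $R(\mathbf f,\boldsymbol\theta,\boldsymbol\beta)$ is a parametric function of a steering vector $\mathbf f\in\mathbb C^N$ with parameters $\boldsymbol\theta\in B^k$ and $\boldsymbol\beta\in\Theta^k$ ranging over finite grids; $(\boldsymbol\theta^*,\boldsymbol\beta^* )$ denotes the true parameter. The dataset $S_M=\{(a_t,r_t)\}_{t=1}^M$ consists of the first $M$ action–reward pairs. The probability is over the noise $\eta_1,\dots,\eta_M$ (conditionally on the actions). *)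

theory Defs
  imports "HOL-Analysis.Analysis" "HOL-Probability.Probability"
begin

definition SSE :: "nat \<Rightarrow> (nat \<Rightarrow> 'x) \<Rightarrow> (nat \<Rightarrow> nat) \<Rightarrow> ('x \<Rightarrow> real) \<Rightarrow> (nat \<Rightarrow> real) \<Rightarrow> real" where
  "SSE M f a g r = (\<Sum>t=1..M. (g (f (a t)) - r t)\<^sup>2)"

definition data_norm :: "nat \<Rightarrow> (nat \<Rightarrow> 'x) \<Rightarrow> (nat \<Rightarrow> nat) \<Rightarrow> ('x \<Rightarrow> real) \<Rightarrow> real" where
  "data_norm M f a g = sqrt (\<Sum>t=1..M. (g (f (a t)))\<^sup>2)"

end

theory Submission
  imports Defs
begin

text \<open>Writing \<open>d\<^sub>t\<close> for the difference of a candidate model and the true one at the \<open>t\<close>-th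
  played beam, the excess squared error is \<open>\<Sum> d\<^sub>t\<^sup>2 - 2 \<Sum> d\<^sub>t \<eta>\<^sub>t\<close>, and the cross term is
  \<open>N(0, \<sigma>\<^sup>2 v)\<close> with \<open>v = \<Sum> d\<^sub>t\<^sup>2\<close>. The Gaussian tail \<open>P(|Z| > x) \<le> exp (-x\<^sup>2 / (2 \<sigma>\<^sup>2 v))\<close> at
  \<open>x = v/4 + C/2\<close>, together with \<open>x\<^sup>2 \<ge> v C / 2\<close>, bounds the probability that
  \<open>|\<Sum> d\<^sub>t \<eta>\<^sub>t| > v/4 + C/2\<close> by \<open>exp (-C / (4 \<sigma>\<^sup>2))\<close>, uniformly in \<open>v\<close>. With
  \<open>C = 4 k \<sigma>\<^sup>2 ln (|B| |\<Theta>| / \<delta>)\<close> this is \<open>(\<delta> / (|B| |\<Theta>|))\<^sup>k\<close>, so a union bound over the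
  \<open>(|B| |\<Theta>|)\<^sup>k\<close> parameters leaves an exceptional event of probability at most
  \<open>\<delta>\<^sup>k \<le> \<delta>\<close>; off it, both inequalities follow from \<open>|\<Sum> d\<^sub>t \<eta>\<^sub>t| \<le> v/4 + C/2\<close>.\<close>

lemma std_normal_density_minus: "std_normal_density (- x) = std_normal_density x"
  by (simp add: normal_density_def)

lemma std_normal_density_add_le:
  assumes "t \<ge> 0" "x \<ge> 0"
  shows "std_normal_density (t + x) \<le> exp (- t\<^sup>2 / 2) * std_normal_density x"
proof -
  have "- (t + x)\<^sup>2 / 2 \<le> - t\<^sup>2 / 2 + - x\<^sup>2 / 2"
    using mult_nonneg_nonneg[OF assms] by (simp add: power2_sum)
  then have "exp (- (t + x)\<^sup>2 / 2) \<le> exp (- t\<^sup>2 / 2) * exp (- x\<^sup>2 / 2)"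
    by (simp add: mult_exp_exp)
  then show ?thesis
    by (simp add: std_normal_density_def mult.left_commute divide_right_mono)
qed

lemma std_normal_upper_tail_le:
  assumes "t \<ge> 0"
  shows "(\<integral>\<^sup>+x\<in>{t<..}. ennreal (std_normal_density x) \<partial>lborel)
    \<le> ennreal (exp (- t\<^sup>2 / 2)) * (\<integral>\<^sup>+x\<in>{0<..}. ennreal (std_normal_density x) \<partial>lborel)"
proof -
  have "(\<integral>\<^sup>+x\<in>{t<..}. ennreal (std_normal_density x) \<partial>lborel)
      = (\<integral>\<^sup>+x\<in>{0<..}. ennreal (std_normal_density (t + x)) \<partial>lborel)"
    by (subst nn_integral_real_affine[where c=1 and t=t])
       (auto intro!: nn_integral_cong simp: indicator_def)
  also have "\<dots> \<le> (\<integral>\<^sup>+x. ennreal (exp (- t\<^sup>2 / 2)) * (ennreal (std_normal_density x) * indicator {0<..} x) \<partial>lborel)"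
    using std_normal_density_add_le[OF assms]
    by (intro nn_integral_mono) (simp add: indicator_def ennreal_mult'[symmetric] ennreal_leI)
  also have "\<dots> = ennreal (exp (- t\<^sup>2 / 2)) * (\<integral>\<^sup>+x\<in>{0<..}. ennreal (std_normal_density x) \<partial>lborel)"
    by (rule nn_integral_cmult) auto
  finally show ?thesis .
qed

lemma std_normal_abs_tail_eq:
  assumes "t \<ge> 0"
  shows "(\<integral>\<^sup>+x\<in>{x. t < \<bar>x\<bar>}. ennreal (std_normal_density x) \<partial>lborel)
    = 2 * (\<integral>\<^sup>+x\<in>{t<..}. ennreal (std_normal_density x) \<partial>lborel)"
proof -
  have lower: "(\<integral>\<^sup>+x\<in>{..<-t}. ennreal (std_normal_density x) \<partial>lborel)
      = (\<integral>\<^sup>+x\<in>{t<..}. ennreal (std_normal_density x) \<partial>lborel)"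
    by (subst nn_integral_real_affine[where c="-1" and t=0])
       (auto intro!: nn_integral_cong simp: std_normal_density_minus indicator_def)
  have "(\<integral>\<^sup>+x\<in>{x. t < \<bar>x\<bar>}. ennreal (std_normal_density x) \<partial>lborel)
      = (\<integral>\<^sup>+x. ennreal (std_normal_density x) * indicator {t<..} x
               + ennreal (std_normal_density x) * indicator {..<-t} x \<partial>lborel)"
    using assms by (intro nn_integral_cong) (auto simp: indicator_def)
  also have "\<dots> = 2 * (\<integral>\<^sup>+x\<in>{t<..}. ennreal (std_normal_density x) \<partial>lborel)"
    by (subst nn_integral_add) (auto simp: lower mult_2)
  finally show ?thesis .
qed

lemma std_normal_abs_tail_le:
  assumes "t \<ge> 0"
  shows "(\<integral>\<^sup>+x\<in>{x. t < \<bar>x\<bar>}. ennreal (std_normal_density x) \<partial>lborel) \<le> ennreal (exp (- t\<^sup>2 / 2))"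
proof -
  have half: "2 * (\<integral>\<^sup>+x\<in>{0<..}. ennreal (std_normal_density x) \<partial>lborel) \<le> 1"
  proof -
    have "2 * (\<integral>\<^sup>+x\<in>{0<..}. ennreal (std_normal_density x) \<partial>lborel)
        = (\<integral>\<^sup>+x\<in>{x. 0 < \<bar>x\<bar>}. ennreal (std_normal_density x) \<partial>lborel)"
      using std_normal_abs_tail_eq[of 0] by simp
    also have "\<dots> \<le> (\<integral>\<^sup>+x. ennreal (std_normal_density x) \<partial>lborel)"
      by (intro nn_integral_mono) (auto simp: indicator_def)
    also have "\<dots> = 1"
      by (subst nn_integral_eq_integral) auto
    finally show ?thesis .
  qed
  have "(\<integral>\<^sup>+x\<in>{x. t < \<bar>x\<bar>}. ennreal (std_normal_density x) \<partial>lborel)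
      \<le> 2 * (ennreal (exp (- t\<^sup>2 / 2)) * (\<integral>\<^sup>+x\<in>{0<..}. ennreal (std_normal_density x) \<partial>lborel))"
    unfolding std_normal_abs_tail_eq[OF assms]
    using std_normal_upper_tail_le[OF assms] by (intro mult_left_mono) auto
  also have "\<dots> \<le> ennreal (exp (- t\<^sup>2 / 2)) * 1"
    using half by (simp only: mult.left_commute[of 2]) (intro mult_left_mono; simp)
  finally show ?thesis by simp
qed

lemma (in prob_space) normal_abs_tail_le:
  assumes Y: "distributed M lborel Y (normal_density 0 s)" and s: "s > 0" and x: "x \<ge> 0"
  shows "prob {\<omega>\<in>space M. x < \<bar>Y \<omega>\<bar>} \<le> exp (- x\<^sup>2 / (2 * s\<^sup>2))"
proof -
  have Z: "distributed M lborel (\<lambda>\<omega>. Y \<omega> / s) std_normal_density"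
    using Y normal_standard_normal_convert[OF s] by simp
  have event: "{\<omega>\<in>space M. x < \<bar>Y \<omega>\<bar>} = (\<lambda>\<omega>. Y \<omega> / s) -` {z. x / s < \<bar>z\<bar>} \<inter> space M"
    using s by (auto simp: field_simps abs_divide)
  have "emeasure M {\<omega>\<in>space M. x < \<bar>Y \<omega>\<bar>}
      = (\<integral>\<^sup>+z\<in>{z. x / s < \<bar>z\<bar>}. ennreal (std_normal_density z) \<partial>lborel)"
    unfolding event by (rule distributed_emeasure[OF Z]) auto
  also have "\<dots> \<le> ennreal (exp (- (x / s)\<^sup>2 / 2))"
    using s x by (intro std_normal_abs_tail_le) auto
  finally show ?thesis
    by (simp add: emeasure_eq_measure power_divide mult.commute)
qed

lemma (in prob_space) distributed_weighted_sum_normal: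
  assumes indep: "indep_vars (\<lambda>_. borel) \<eta> I" and fin: "finite I"
    and dist: "\<And>t. t \<in> I \<Longrightarrow> distributed M lborel (\<eta> t) (normal_density 0 \<sigma>)"
    and \<sigma>: "\<sigma> > 0" and nonzero: "\<exists>t\<in>I. d t \<noteq> 0"
  shows "distributed M lborel (\<lambda>\<omega>. \<Sum>t\<in>I. d t * \<eta> t \<omega>)
           (normal_density 0 (\<sigma> * sqrt (\<Sum>t\<in>I. (d t)\<^sup>2)))"
proof -
  \<comment> \<open>\<open>sum_indep_normal\<close> needs positive standard deviations, so drop the zero weights.\<close>
  define J where "J = {t\<in>I. d t \<noteq> 0}"
  have JI: "J \<subseteq> I" and finJ: "finite J" and J: "J \<noteq> {}"
    using fin nonzero by (auto simp: J_def)
  have "indep_vars (\<lambda>_. borel) (\<lambda>t \<omega>. d t * \<eta> t \<omega>) J"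
    using indep_vars_compose2[OF indep_vars_subset[OF indep JI], where Y="\<lambda>t x. d t * x" and N="\<lambda>_. borel"]
    by simp
  moreover have "distributed M lborel (\<lambda>\<omega>. d t * \<eta> t \<omega>) (normal_density 0 (\<bar>d t\<bar> * \<sigma>))"
    if "t \<in> J" for t
    using normal_density_affine[OF dist, of t "d t" 0] that \<sigma> by (simp add: J_def)
  ultimately have "distributed M lborel (\<lambda>\<omega>. \<Sum>t\<in>J. d t * \<eta> t \<omega>)
      (normal_density (\<Sum>t\<in>J. 0) (sqrt (\<Sum>t\<in>J. (\<bar>d t\<bar> * \<sigma>)\<^sup>2)))"
    using \<sigma> by (intro sum_indep_normal[OF finJ J]) (auto simp: J_def)
  moreover have "sqrt (\<Sum>t\<in>J. (\<bar>d t\<bar> * \<sigma>)\<^sup>2) = \<sigma> * sqrt (\<Sum>t\<in>J. (d t)\<^sup>2)"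
    using \<sigma> by (simp add: power_mult_distrib sum_distrib_right[symmetric] real_sqrt_mult)
  moreover have "(\<Sum>t\<in>I. g t) = (\<Sum>t\<in>J. g t)" if "\<And>t. d t = 0 \<Longrightarrow> g t = 0" for g :: "_ \<Rightarrow> real"
    using fin that by (intro sum.mono_neutral_right) (auto simp: J_def)
  ultimately show ?thesis
    by simp
qed

lemma (in prob_space) weighted_normal_sum_deviation:
  assumes indep: "indep_vars (\<lambda>_. borel) \<eta> I" and fin: "finite I"
    and dist: "\<And>t. t \<in> I \<Longrightarrow> distributed M lborel (\<eta> t) (normal_density 0 \<sigma>)"
    and \<sigma>: "\<sigma> > 0" and C: "C > 0"
  shows "prob {\<omega>\<in>space M. (\<Sum>t\<in>I. (d t)\<^sup>2) / 4 + C / 2 < \<bar>\<Sum>t\<in>I. d t * \<eta> t \<omega>\<bar>}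
           \<le> exp (- C / (4 * \<sigma>\<^sup>2))"
proof (cases "\<exists>t\<in>I. d t \<noteq> 0")
  case False
  then have empty: "{\<omega>\<in>space M. (\<Sum>t\<in>I. (d t)\<^sup>2) / 4 + C / 2 < \<bar>\<Sum>t\<in>I. d t * \<eta> t \<omega>\<bar>} = {}"
    using C by auto
  show ?thesis
    unfolding empty by simp
next
  case True
  define v where "v = (\<Sum>t\<in>I. (d t)\<^sup>2)"
  define x where "x = v / 4 + C / 2"
  have v: "v > 0"
  proof -
    obtain t where "t \<in> I" "d t \<noteq> 0"
      using True by blast
    then show ?thesis
      unfolding v_def using fin by (intro sum_pos2[of I t]) auto
  qed
  have "prob {\<omega>\<in>space M. x < \<bar>\<Sum>t\<in>I. d t * \<eta> t \<omega>\<bar>} \<le> exp (- x\<^sup>2 / (2 * (\<sigma> * sqrt v)\<^sup>2))"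
    using v C \<sigma> unfolding v_def x_def
    by (intro normal_abs_tail_le distributed_weighted_sum_normal[OF indep fin dist] True)
       (auto intro: add_nonneg_nonneg)
  also have "\<dots> \<le> exp (- C / (4 * \<sigma>\<^sup>2))"
  proof -
    \<comment> \<open>AM-GM: \<open>x\<^sup>2 = (v/4 - C/2)\<^sup>2 + v C / 2\<close>\<close>
    have "v * C / 2 \<le> x\<^sup>2"
      using zero_le_power2[of "v / 4 - C / 2"] unfolding x_def by (simp add: power2_eq_square algebra_simps)
    then have "C / (4 * \<sigma>\<^sup>2) \<le> x\<^sup>2 / (2 * (\<sigma>\<^sup>2 * v))"
      using \<sigma> v by (simp add: field_simps)
    then show ?thesis
      using v by (simp add: power_mult_distrib)
  qed
  finally show ?thesis
    unfolding x_def v_def .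
qed

lemma (in prob_space) uniform_weighted_normal_sum_bound:
  assumes indep: "indep_vars (\<lambda>_. borel) \<eta> I" and fin: "finite I"
    and dist: "\<And>t. t \<in> I \<Longrightarrow> distributed M lborel (\<eta> t) (normal_density 0 \<sigma>)"
    and \<sigma>: "\<sigma> > 0" and C: "C > 0"
    and Par: "finite Par" and small: "real (card Par) * exp (- C / (4 * \<sigma>\<^sup>2)) \<le> \<delta>"
  shows "\<exists>E\<in>events. prob E \<ge> 1 - \<delta> \<and>
           (\<forall>\<omega>\<in>E. \<forall>p\<in>Par. \<bar>\<Sum>t\<in>I. d p t * \<eta> t \<omega>\<bar> \<le> (\<Sum>t\<in>I. (d p t)\<^sup>2) / 4 + C / 2)"
proof -
  define bad where
    "bad p = {\<omega>\<in>space M. (\<Sum>t\<in>I. (d p t)\<^sup>2) / 4 + C / 2 < \<bar>\<Sum>t\<in>I. d p t * \<eta> t \<omega>\<bar>}" for p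
  have bad_events: "bad p \<in> events" for p
  proof -
    have "\<eta> t \<in> borel_measurable M" if "t \<in> I" for t
      using distributed_measurable[OF dist[OF that]] by simp
    then show ?thesis
      unfolding bad_def by measurable
  qed
  have union_events: "(\<Union>p\<in>Par. bad p) \<in> events"
    using Par bad_events by auto
  have "prob (\<Union>p\<in>Par. bad p) \<le> (\<Sum>p\<in>Par. prob (bad p))"
    using Par bad_events by (intro measure_UNION_le) auto
  also have "\<dots> \<le> (\<Sum>p\<in>Par. exp (- C / (4 * \<sigma>\<^sup>2)))"
    unfolding bad_def by (intro sum_mono weighted_normal_sum_deviation[OF indep fin dist \<sigma> C])
  also have "\<dots> \<le> \<delta>"
    using small by simp
  finally have "prob (space M - (\<Union>p\<in>Par. bad p)) \<ge> 1 - \<delta>"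
    using prob_compl[OF union_events] by simp
  moreover have "\<forall>\<omega>\<in>space M - (\<Union>p\<in>Par. bad p). \<forall>p\<in>Par.
      \<bar>\<Sum>t\<in>I. d p t * \<eta> t \<omega>\<bar> \<le> (\<Sum>t\<in>I. (d p t)\<^sup>2) / 4 + C / 2"
    unfolding bad_def by auto
  ultimately show ?thesis
    using union_events by blast
qed

lemma data_norm_square: "(data_norm M f a g)\<^sup>2 = (\<Sum>t=1..M. (g (f (a t)))\<^sup>2)"
  unfolding data_norm_def by (simp add: sum_nonneg)

lemma SSE_diff_eq:
  assumes "\<And>t. t \<in> {1..M} \<Longrightarrow> r t = g\<^sub>0 (f (a t)) + e t"
  shows "SSE M f a g r - SSE M f a g\<^sub>0 r
    = (data_norm M f a (\<lambda>x. g x - g\<^sub>0 x))\<^sup>2 - 2 * (\<Sum>t=1..M. (g (f (a t)) - g\<^sub>0 (f (a t))) * e t)"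
  unfolding SSE_def data_norm_square sum_subtractf[symmetric] sum_distrib_left
  using assms by (intro sum.cong) (auto simp: power2_eq_square algebra_simps)

lemma (in prob_space) least_squares_excess_error_bounds:
  assumes indep: "indep_vars (\<lambda>_. borel) \<eta> {1..n}"
    and dist: "\<And>t. t \<in> {1..n} \<Longrightarrow> distributed M lborel (\<eta> t) (normal_density 0 \<sigma>)"
    and model: "\<And>t \<omega>. t \<in> {1..n} \<Longrightarrow> r t \<omega> = g\<^sub>0 (f (a t)) + \<eta> t \<omega>"
    and \<sigma>: "\<sigma> > 0" and C: "C > 0"
    and Par: "finite Par" and small: "real (card Par) * exp (- C / (4 * \<sigma>\<^sup>2)) \<le> \<delta>"
  shows "\<exists>E\<in>events. prob E \<ge> 1 - \<delta> \<and> (\<forall>\<omega>\<in>E. \<forall>p\<in>Par.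
           SSE n f a (g p) (\<lambda>t. r t \<omega>) - SSE n f a g\<^sub>0 (\<lambda>t. r t \<omega>)
             \<ge> 1/2 * (data_norm n f a (\<lambda>x. g p x - g\<^sub>0 x))\<^sup>2 - C \<and>
           SSE n f a (g p) (\<lambda>t. r t \<omega>) - SSE n f a g\<^sub>0 (\<lambda>t. r t \<omega>)
             \<le> 3/2 * (data_norm n f a (\<lambda>x. g p x - g\<^sub>0 x))\<^sup>2 + C)"
proof -
  obtain E where E: "E \<in> events" "prob E \<ge> 1 - \<delta>"
    and bound: "\<forall>\<omega>\<in>E. \<forall>p\<in>Par. \<bar>\<Sum>t=1..n. (g p (f (a t)) - g\<^sub>0 (f (a t))) * \<eta> t \<omega>\<bar>
       \<le> (data_norm n f a (\<lambda>x. g p x - g\<^sub>0 x))\<^sup>2 / 4 + C / 2"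
    using uniform_weighted_normal_sum_bound[OF indep _ dist \<sigma> C Par small,
        where d="\<lambda>p t. g p (f (a t)) - g\<^sub>0 (f (a t))"]
    unfolding data_norm_square by auto
  have excess: "SSE n f a (g p) (\<lambda>t. r t \<omega>) - SSE n f a g\<^sub>0 (\<lambda>t. r t \<omega>)
      = (data_norm n f a (\<lambda>x. g p x - g\<^sub>0 x))\<^sup>2
        - 2 * (\<Sum>t=1..n. (g p (f (a t)) - g\<^sub>0 (f (a t))) * \<eta> t \<omega>)" for p \<omega>
    by (rule SSE_diff_eq) (simp add: model)
  show ?thesis
  proof (intro bexI[OF _ E(1)] conjI E(2) ballI)
    fix \<omega> p
    assume "\<omega> \<in> E" "p \<in> Par"
    then have "\<bar>\<Sum>t=1..n. (g p (f (a t)) - g\<^sub>0 (f (a t))) * \<eta> t \<omega>\<bar>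
        \<le> (data_norm n f a (\<lambda>x. g p x - g\<^sub>0 x))\<^sup>2 / 4 + C / 2"
      using bound by blast
    then show "SSE n f a (g p) (\<lambda>t. r t \<omega>) - SSE n f a g\<^sub>0 (\<lambda>t. r t \<omega>)
        \<ge> 1/2 * (data_norm n f a (\<lambda>x. g p x - g\<^sub>0 x))\<^sup>2 - C"
      and "SSE n f a (g p) (\<lambda>t. r t \<omega>) - SSE n f a g\<^sub>0 (\<lambda>t. r t \<omega>)
        \<le> 3/2 * (data_norm n f a (\<lambda>x. g p x - g\<^sub>0 x))\<^sup>2 + C"
      unfolding excess by (simp_all add: abs_le_iff)
  qed
qed

lemma power_mult_exp_minus_ln:
  fixes Q \<delta> :: real
  assumes "Q > 0" "\<delta> > 0"
  shows "Q ^ k * exp (- (real k * ln (Q / \<delta>))) = \<delta> ^ k"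
proof -
  have "- (real k * ln (Q / \<delta>)) = real k * ln (\<delta> / Q)"
    using assms by (simp add: ln_div algebra_simps)
  then show ?thesis
    using assms by (simp add: exp_of_nat_mult power_divide)
qed

theorem mainTheorem1:
  fixes P :: "'w measure"
    and K k M :: nat
    and B :: "'b set" and \<Theta> :: "'c set"
    and f :: "nat \<Rightarrow> complex ^ 'n"
    and R :: "complex ^ 'n \<Rightarrow> (nat \<Rightarrow> 'b) \<Rightarrow> (nat \<Rightarrow> 'c) \<Rightarrow> real"
    and \<theta>s :: "nat \<Rightarrow> 'b" and \<beta>s :: "nat \<Rightarrow> 'c"
    and a :: "nat \<Rightarrow> nat"
    and \<eta> :: "nat \<Rightarrow> 'w \<Rightarrow> real"
    and r :: "nat \<Rightarrow> 'w \<Rightarrow> real"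
    and \<sigma> \<delta> :: real
  assumes "prob_space P"
    and "K > 0" "k > 0" "M > 0"
    and "finite B" "B \<noteq> {}" "finite \<Theta>" "\<Theta> \<noteq> {}"
    and "\<theta>s \<in> PiE {..<k} (\<lambda>_. B)" "\<beta>s \<in> PiE {..<k} (\<lambda>_. \<Theta>)"
    and "\<And>t. t \<in> {1..M} \<Longrightarrow> a t \<in> {1..K}"
    and "\<sigma> > 0"
    and "prob_space.indep_vars P (\<lambda>_. borel) \<eta> {1..M}"
    and "\<And>t. t \<in> {1..M} \<Longrightarrow> distributed P lborel (\<eta> t) (normal_density 0 \<sigma>)"
    and "\<And>t \<omega>. t \<in> {1..M} \<Longrightarrow> r t \<omega> = R (f (a t)) \<theta>s \<beta>s + \<eta> t \<omega>"
    and "0 < \<delta>" "\<delta> < 1"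
  shows "\<exists>E \<in> sets P. measure P E \<ge> 1 - \<delta> \<and>
    (\<forall>\<omega> \<in> E. \<forall>\<theta> \<in> PiE {..<k} (\<lambda>_. B). \<forall>\<beta> \<in> PiE {..<k} (\<lambda>_. \<Theta>).
       SSE M f a (\<lambda>x. R x \<theta> \<beta>) (\<lambda>t. r t \<omega>) - SSE M f a (\<lambda>x. R x \<theta>s \<beta>s) (\<lambda>t. r t \<omega>)
         \<ge> 1/2 * (data_norm M f a (\<lambda>x. R x \<theta> \<beta> - R x \<theta>s \<beta>s))\<^sup>2
           - 4 * real k * \<sigma>\<^sup>2 * ln (real (card B) * real (card \<Theta>) / \<delta>)
     \<and> SSE M f a (\<lambda>x. R x \<theta> \<beta>) (\<lambda>t. r t \<omega>) - SSE M f a (\<lambda>x. R x \<theta>s \<beta>s) (\<lambda>t. r t \<omega>)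
         \<le> 3/2 * (data_norm M f a (\<lambda>x. R x \<theta> \<beta> - R x \<theta>s \<beta>s))\<^sup>2
           + 4 * real k * \<sigma>\<^sup>2 * ln (real (card B) * real (card \<Theta>) / \<delta>))"
proof -
  interpret prob_space P by fact
  define Q where "Q = real (card B) * real (card \<Theta>)"
  define C where "C = 4 * real k * \<sigma>\<^sup>2 * ln (Q / \<delta>)"
  define Par where "Par = PiE {..<k} (\<lambda>_. B) \<times> PiE {..<k} (\<lambda>_. \<Theta>)"
  have "Q \<ge> 1"
    using assms(5-8) by (simp add: Q_def card_gt_0_iff Suc_le_eq mult_ge1_I)
  then have "C > 0"
    using assms(3,12,16,17) by (simp add: C_def)
  have "real (card Par) = Q ^ k"
    using assms(5,7) by (simp add: Par_def Q_def card_cartesian_product card_PiE power_mult_distrib)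
  then have "real (card Par) * exp (- C / (4 * \<sigma>\<^sup>2)) = \<delta> ^ k"
    using \<open>Q \<ge> 1\<close> assms(12,16) by (simp add: C_def power_mult_exp_minus_ln)
  also have "\<dots> \<le> \<delta>"
    using assms(3,16,17) power_decreasing[of 1 k \<delta>] by simp
  finally have small: "real (card Par) * exp (- C / (4 * \<sigma>\<^sup>2)) \<le> \<delta>" .
  have "finite Par"
    using assms(5,7) by (simp add: Par_def finite_PiE)
  from least_squares_excess_error_bounds[where g="\<lambda>p x. R x (fst p) (snd p)" and g\<^sub>0="\<lambda>x. R x \<theta>s \<beta>s"
      and f=f and a=a and Par=Par, OF assms(13,14,15,12) \<open>C > 0\<close> \<open>finite Par\<close> small]
  show ?thesis
    unfolding Par_def C_def Q_def by simp
qed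

end
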